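(* Let $\mathbf{x}_t=\mathbf{x}+t\mathbf{v}$, $t=1,2,\dots$, with $\mathbf{v}\neq\mathbf{0}$, and let points $\mathbf{o}_q$ (access points) form a homogeneous Poisson point process on $\mathbb{R}^2$ of density $\kappa>0$. For $0<r_0<R$, let $\mathcal{Q}_t$ be the set of points with $r_0\le\|\mathbf{d}_{t,q}\|\le R$, where $\mathbf{d}_{t,q}=\mathbf{x}_t-\mathbf{o}_q$, and let $d_{t,q,1}$ be the component of $\mathbf{d}_{t,q}$ along $\mathbf{v}$. Define $$\tilde{\mathbf{A}}_{T,v}=\sum_{t=1}^T\mathbb{E}\Big\{\sum_{q\in\mathcal{Q}_t}\frac{t^2d_{t,q,1}^2}{\|\mathbf{d}_{t,q}\|^8}\big(\|\mathbf{d}_{t,q}\|^2\mathbf{I}-\mathbf{d}_{t,q}\mathbf{d}_{t,q}^{\mathrm T}\big)\Big\},$$ the expectation being over the point process. Then $\frac{\lambda_{\min}(\tilde{\mathbf{A}}_{T,v})}{T(T+1)(2T+1)}\to\frac{\pi}{48}\kappa\big(\frac1{r_0^2}-\frac1{R^2}\big)$ as $T\to\infty$.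
   Context: The condition $\|\mathbf{d}_{t,q}\|\ge r_0$ encodes the paper's assumption that every access point used at time $t$ is at distance at least $r_0$ from the user. *)

theory Defs
  imports "HOL-Analysis.Analysis" "HOL-Probability.Probability"
begin

definition comp_along :: "real^2 \<Rightarrow> real^2 \<Rightarrow> real" where
  "comp_along v d = (d \<bullet> v) / norm v"

definition outer :: "real^2 \<Rightarrow> real^2 \<Rightarrow> real^2^2" where
  "outer a b = (\<chi> i j. a $ i * b $ j)"

definition lambda_min :: "real^2^2 \<Rightarrow> real" where
  "lambda_min A = Inf {l. \<exists>u. u \<noteq> 0 \<and> A *v u = l *\<^sub>R u}"

text \<open>Expectation of the sum of f over the points of a homogeneous Poisson point
  process of density kappa, observed in a bounded window B: the number of points in B
  is Poisson with mean kappa * |B| and, given that number n, the points are n i.i.d.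
  uniform points of B.  This is the law of the restriction of the PPP on R^2 to B, so
  for f vanishing outside B it equals the expectation of the sum over all points of
  the PPP.\<close>
definition ppp_expect ::
  "real \<Rightarrow> (real^2) set \<Rightarrow> (real^2 \<Rightarrow> 'b::{banach,second_countable_topology}) \<Rightarrow> 'b" where
  "ppp_expect kappa B f =
     (\<integral>n. (\<integral>\<omega>. (\<Sum>i<n. f (\<omega> i)) \<partial>(PiM {..<n} (\<lambda>_. uniform_measure lborel B)))
        \<partial>(measure_pmf (poisson_pmf (kappa * measure lborel B))))"

end

theory Submission
  imports Defs
begin

(* By Campbell's formula, the expected sum over the Poisson points of the window is kappa times
   the Lebesgue integral of the summand.  After the substitution d = x_t - p the t-th term becomes
   kappa t^2 G, where G is the integral of (d.u)^2 / |d|^8 (|d|^2 I - d d^T), u = v / |v|, over the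
   annulus r0 <= |d| <= R; in particular it depends neither on x nor on t.  In polar coordinates
   G = pi/8 (1/r0^2 - 1/R^2) (3 I - 2 u u^T), whose smallest eigenvalue pi/8 (1/r0^2 - 1/R^2) has
   eigenvector u.  As the sum of t^2 over 1..T is T (T+1) (2T+1) / 6, the normalised smallest
   eigenvalue of the sum is constant for T >= 1, equal to the limit. *)

section \<open>Campbell's formula\<close>

lemma poisson_pmf_expectation:
  fixes rate :: real
  assumes "0 < rate"
  shows "integrable (measure_pmf (poisson_pmf rate)) real"
    and "(\<integral>n. real n \<partial>measure_pmf (poisson_pmf rate)) = rate"
proof -
  have shifted: "(\<lambda>n. pmf (poisson_pmf rate) (Suc n) * real (Suc n))
      = (\<lambda>n. rate * exp (- rate) * (rate ^ n / fact n))"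
    using assms by (simp add: fact_Suc divide_simps mult_ac del: of_nat_Suc)
  have "(\<lambda>n. pmf (poisson_pmf rate) (Suc n) * real (Suc n)) sums (rate * exp (- rate) * exp rate)"
    unfolding shifted using exp_converges[of rate]
    by (intro sums_mult) (simp add: divide_inverse mult.commute)
  then have sums: "(\<lambda>n. pmf (poisson_pmf rate) n * real n) sums rate"
    by (subst (asm) sums_Suc_iff) (simp add: exp_minus field_simps)
  then have int: "integrable (count_space UNIV) (\<lambda>n. pmf (poisson_pmf rate) n *\<^sub>R real n)"
    by (subst integrable_count_space_nat_iff) (auto simp: sums_iff)
  show "integrable (measure_pmf (poisson_pmf rate)) real"
    unfolding measure_pmf_eq_density using int by (subst integrable_density) auto
  show "(\<integral>n. real n \<partial>measure_pmf (poisson_pmf rate)) = rate"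
    unfolding measure_pmf_eq_density
    using int sums by (subst integral_density) (auto simp: integral_count_space_nat sums_iff)
qed

lemma integral_PiM_sum_components:
  fixes f :: "'a \<Rightarrow> 'b::{banach,second_countable_topology}"
  assumes "prob_space M" "finite I" "integrable M f"
  shows "(\<integral>\<omega>. (\<Sum>i\<in>I. f (\<omega> i)) \<partial>PiM I (\<lambda>_. M)) = real (card I) *\<^sub>R (\<integral>x. f x \<partial>M)"
proof -
  have distr: "distr (PiM I (\<lambda>_. M)) M (\<lambda>\<omega>. \<omega> i) = M" if "i \<in> I" for i
    using distr_PiM_component[of I "\<lambda>_. M" i] assms(1,2) that by (simp add: prob_space_imp_sigma_finite)
  have component: "(\<lambda>\<omega>. \<omega> i) \<in> measurable (PiM I (\<lambda>_. M)) M" if "i \<in> I" for i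
    using that by (rule measurable_component_singleton)
  have "(\<integral>\<omega>. (\<Sum>i\<in>I. f (\<omega> i)) \<partial>PiM I (\<lambda>_. M)) = (\<Sum>i\<in>I. \<integral>\<omega>. f (\<omega> i) \<partial>PiM I (\<lambda>_. M))"
    using assms(3) distr integrable_distr_eq[OF component borel_measurable_integrable[OF assms(3)]]
    by (intro Bochner_Integration.integral_sum) simp
  also have "\<dots> = (\<Sum>i\<in>I. \<integral>x. f x \<partial>M)"
    using distr integral_distr[OF component borel_measurable_integrable[OF assms(3)]]
    by (intro sum.cong) auto
  finally show ?thesis
    by (simp add: sum_constant_scaleR)
qed

lemma integral_uniform_measure:
  fixes f :: "'a \<Rightarrow> 'b::{banach,second_countable_topology}"
  assumes A: "A \<in> sets M" "emeasure M A \<noteq> 0" "emeasure M A \<noteq> \<infinity>" and f: "f \<in> borel_measurable M"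
  shows "(\<integral>x. f x \<partial>uniform_measure M A) = (1 / measure M A) *\<^sub>R (\<integral>x. indicator A x *\<^sub>R f x \<partial>M)"
proof -
  have "measure M A > 0"
    using A by (simp add: emeasure_eq_ennreal_measure zero_less_measure_iff)
  then have "uniform_measure M A = density M (\<lambda>x. ennreal (indicator A x / measure M A))"
    unfolding uniform_measure_def using A
    by (intro density_cong) (auto simp: emeasure_eq_ennreal_measure divide_ennreal indicator_def
        simp flip: ennreal_1)
  then have "(\<integral>x. f x \<partial>uniform_measure M A) = (\<integral>x. (indicator A x / measure M A) *\<^sub>R f x \<partial>M)"
    using A f by (simp add: integral_density)
  also have "\<dots> = (\<integral>x. (1 / measure M A) *\<^sub>R (indicator A x *\<^sub>R f x) \<partial>M)"
    by simp
  finally show ?thesis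
    by (simp only: Bochner_Integration.integral_scaleR_right)
qed

lemma ppp_expect_campbell:
  fixes f :: "real^2 \<Rightarrow> 'b::{banach,second_countable_topology}"
  assumes B: "B \<in> sets lborel" "emeasure lborel B \<noteq> 0" "emeasure lborel B \<noteq> \<infinity>"
    and kappa: "kappa > 0"
    and f: "f \<in> borel_measurable borel" and bounded: "\<And>p. norm (f p) \<le> C"
  shows "ppp_expect kappa B f = kappa *\<^sub>R (\<integral>p. indicator B p *\<^sub>R f p \<partial>lborel)"
proof -
  define U where "U = uniform_measure lborel B"
  have U: "prob_space U"
    unfolding U_def using B by (intro prob_space_uniform_measure) auto
  have "f \<in> borel_measurable U"
    using f by (simp add: U_def measurable_def)
  then have "integrable U f"
    using U bounded by (intro finite_measure.integrable_const_bound[where B=C]) (auto simp: prob_space_def)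
  then have "(\<integral>\<omega>. (\<Sum>i<n. f (\<omega> i)) \<partial>PiM {..<n} (\<lambda>_. U)) = real n *\<^sub>R (\<integral>p. f p \<partial>U)" for n
    using integral_PiM_sum_components[OF U finite_lessThan] by simp
  then have "ppp_expect kappa B f
      = (\<integral>n. real n *\<^sub>R (\<integral>p. f p \<partial>U) \<partial>measure_pmf (poisson_pmf (kappa * measure lborel B)))"
    unfolding ppp_expect_def U_def[symmetric] by simp
  also have "\<dots> = (kappa * measure lborel B) *\<^sub>R (\<integral>p. f p \<partial>U)"
    using poisson_pmf_expectation[of "kappa * measure lborel B"] kappa B
    by (subst Bochner_Integration.integral_scaleR_left)
       (auto simp: emeasure_eq_ennreal_measure zero_less_measure_iff)
  also have "\<dots> = kappa *\<^sub>R (\<integral>p. indicator B p *\<^sub>R f p \<partial>lborel)"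
    using integral_uniform_measure[OF B, of f] f B
    by (simp add: U_def emeasure_eq_ennreal_measure zero_less_measure_iff)
  finally show ?thesis .
qed

lemma integral_lborel_reflect:
  fixes g :: "'a::euclidean_space \<Rightarrow> 'b::{banach,second_countable_topology}"
  assumes [measurable]: "g \<in> borel_measurable borel"
  shows "(\<integral>p. g (c - p) \<partial>lborel) = (\<integral>d. g d \<partial>lborel)"
proof -
  have "lborel = density (distr lborel borel (\<lambda>x. c + (-1) *\<^sub>R x)) (\<lambda>_. \<bar>-1::real\<bar> ^ DIM('a))"
    by (rule lborel_affine) simp
  then have "(\<integral>d. g d \<partial>lborel) = (\<integral>d. g d \<partial>distr lborel borel (\<lambda>x. c + (-1) *\<^sub>R x))"
    by (simp add: density_1)
  also have "\<dots> = (\<integral>p. g (c - p) \<partial>lborel)"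
    by (subst integral_distr) auto
  finally show ?thesis ..
qed

section \<open>The bearing kernel on an annulus\<close>

definition annulus :: "real \<Rightarrow> real \<Rightarrow> (real^2) set" where
  "annulus r0 R = {d. r0 \<le> norm d \<and> norm d \<le> R}"

(* For u = v / |v| one has comp_along v d = d \<bullet> u, so the t-th summand of the theorem is
   t^2 times bearing_kernel u (x_t - p), cut off outside the annulus. *)
definition bearing_kernel :: "real^2 \<Rightarrow> real^2 \<Rightarrow> real^2^2" where
  "bearing_kernel u d = ((d \<bullet> u)\<^sup>2 / norm d ^ 8) *\<^sub>R ((norm d)\<^sup>2 *\<^sub>R mat 1 - outer d d)"

lemma compact_annulus: "compact (annulus r0 R)"
proof -
  have "annulus r0 R = cball 0 R - ball 0 r0"
    by (auto simp: annulus_def)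
  then show ?thesis
    by (simp add: compact_diff)
qed

lemma zero_notin_annulus: "0 < r0 \<Longrightarrow> 0 \<notin> annulus r0 R"
  by (simp add: annulus_def)

lemma continuous_on_bearing_kernel: "0 \<notin> S \<Longrightarrow> continuous_on S (bearing_kernel u)"
  unfolding bearing_kernel_def outer_def
  by (intro continuous_intros continuous_on_vec_lambda) auto

lemma set_integrable_bearing_kernel:
  assumes "0 < r0"
  shows "set_integrable lborel (annulus r0 R) (bearing_kernel u)"
  unfolding set_integrable_def using assms
  by (intro borel_integrable_compact compact_annulus continuous_on_bearing_kernel zero_notin_annulus)

lemma bounded_bearing_kernel:
  assumes "0 < r0"
  obtains C where "\<And>d. norm (indicator (annulus r0 R) d *\<^sub>R bearing_kernel u d) \<le> C"
proof -
  have "compact (bearing_kernel u ` annulus r0 R)"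
    using assms
    by (intro compact_continuous_image continuous_on_bearing_kernel zero_notin_annulus compact_annulus)
  then obtain C where "\<And>d. d \<in> annulus r0 R \<Longrightarrow> norm (bearing_kernel u d) \<le> C"
    by (meson compact_imp_bounded bounded_iff image_eqI)
  then have "norm (indicator (annulus r0 R) d *\<^sub>R bearing_kernel u d) \<le> max 0 C" for d
    by (cases "d \<in> annulus r0 R") force+
  then show ?thesis
    using that by blast
qed

lemma borel_measurable_bearing_kernel:
  assumes "0 < r0"
  shows "(\<lambda>d. indicator (annulus r0 R) d *\<^sub>R bearing_kernel u d) \<in> borel_measurable borel"
  using assms
  by (intro borel_measurable_continuous_on_indicator borel_closed compact_imp_closed compact_annulus
      continuous_on_bearing_kernel zero_notin_annulus) simp_all

lemma ppp_expect_bearing_term: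
  fixes c v :: "real^2"
  assumes kappa: "kappa > 0" and r0: "0 < r0" "r0 < R"
  shows "ppp_expect kappa (cball c R)
        (\<lambda>p. let d = c - p in
              if r0 \<le> norm d \<and> norm d \<le> R
              then (a * (comp_along v d)\<^sup>2 / norm d ^ 8) *\<^sub>R ((norm d)\<^sup>2 *\<^sub>R mat 1 - outer d d)
              else 0)
     = (kappa * a) *\<^sub>R (\<integral>d. indicator (annulus r0 R) d *\<^sub>R bearing_kernel (v /\<^sub>R norm v) d \<partial>lborel)"
proof -
  define g where "g d = indicator (annulus r0 R) d *\<^sub>R bearing_kernel (v /\<^sub>R norm v) d" for d
  have g_measurable [measurable]: "g \<in> borel_measurable borel"
    unfolding g_def using r0(1) by (rule borel_measurable_bearing_kernel)
  obtain C where C: "\<And>d. norm (g d) \<le> C"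
    unfolding g_def using bounded_bearing_kernel[OF r0(1)] by blast
  have along: "comp_along v d = d \<bullet> (v /\<^sub>R norm v)" for d
    by (simp add: comp_along_def divide_inverse mult.commute)
  have integrand: "(\<lambda>p. let d = c - p in
              if r0 \<le> norm d \<and> norm d \<le> R
              then (a * (comp_along v d)\<^sup>2 / norm d ^ 8) *\<^sub>R ((norm d)\<^sup>2 *\<^sub>R mat 1 - outer d d)
              else 0) = (\<lambda>p. a *\<^sub>R g (c - p))"
    by (auto simp: fun_eq_iff g_def annulus_def bearing_kernel_def along Let_def)
  have window: "(\<lambda>p. indicator (cball c R) p *\<^sub>R a *\<^sub>R g (c - p)) = (\<lambda>p. a *\<^sub>R g (c - p))"
    by (auto simp: fun_eq_iff g_def annulus_def dist_norm indicator_def)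
  have ball: "cball c R \<in> sets lborel" "emeasure lborel (cball c R) \<noteq> 0" "emeasure lborel (cball c R) \<noteq> \<infinity>"
    using r0 emeasure_lborel_cball_finite[of c R] content_cball_pos[of R c]
    by (auto simp: measure_def)
  have "ppp_expect kappa (cball c R) (\<lambda>p. a *\<^sub>R g (c - p)) = kappa *\<^sub>R (\<integral>p. a *\<^sub>R g (c - p) \<partial>lborel)"
    using ppp_expect_campbell[OF ball kappa, of "\<lambda>p. a *\<^sub>R g (c - p)" "\<bar>a\<bar> * C"] C
    unfolding window by (simp add: mult_left_mono)
  also have "\<dots> = (kappa * a) *\<^sub>R (\<integral>d. g d \<partial>lborel)"
    by (simp add: integral_lborel_reflect)
  finally show ?thesis
    unfolding integrand g_def .
qed

section \<open>Polar coordinates in the plane\<close>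

(* Fubini's theorem is available for product types, so boxes of real^2 are transported to
   real \<times> real by the volume-preserving vec2. *)
definition vec2 :: "real \<times> real \<Rightarrow> real^2" where
  "vec2 z = vector [fst z, snd z]"

definition unvec2 :: "real^2 \<Rightarrow> real \<times> real" where
  "unvec2 p = (p$1, p$2)"

lemma vec2_unvec2 [simp]: "vec2 (unvec2 p) = p"
  by (simp add: vec2_def unvec2_def vec_eq_iff forall_2)

lemma unvec2_vec2 [simp]: "unvec2 (vec2 z) = z"
  by (simp add: vec2_def unvec2_def)

lemma mem_cbox_real2: "(p::real^2) \<in> cbox a b \<longleftrightarrow> a$1 \<le> p$1 \<and> p$1 \<le> b$1 \<and> a$2 \<le> p$2 \<and> p$2 \<le> b$2"
  by (auto simp: mem_box_cart forall_2)

lemma vec2_image_cbox: "vec2 ` cbox u v = cbox (vec2 u) (vec2 v)"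
proof (intro equalityI subsetI)
  show "p \<in> cbox (vec2 u) (vec2 v)" if "p \<in> vec2 ` cbox u v" for p
    using that by (cases u, cases v) (auto simp: mem_cbox_real2 vec2_def cbox_Pair_eq)
  show "p \<in> vec2 ` cbox u v" if "p \<in> cbox (vec2 u) (vec2 v)" for p
  proof
    show "unvec2 p \<in> cbox u v"
      using that by (cases u, cases v) (auto simp: mem_cbox_real2 vec2_def unvec2_def cbox_Pair_eq)
  qed simp
qed

lemma unvec2_image_cbox: "unvec2 ` cbox u v = cbox (unvec2 u) (unvec2 v)"
proof -
  have "unvec2 ` vec2 ` cbox (unvec2 u) (unvec2 v) = cbox (unvec2 u) (unvec2 v)"
    by (simp add: image_image)
  then show ?thesis
    by (simp add: vec2_image_cbox)
qed

lemma measure_vec2_image_cbox: "measure lborel (vec2 ` cbox u v) = measure lborel (cbox u v)"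
proof -
  obtain u1 u2 v1 v2 where uv: "u = (u1, u2)" "v = (v1, v2)"
    by fastforce
  show ?thesis
  proof (cases "u1 \<le> v1 \<and> u2 \<le> v2")
    case True
    then have "vec2 u \<in> cbox (vec2 u) (vec2 v)"
      by (simp add: uv vec2_def mem_cbox_real2)
    then have "measure lborel (cbox (vec2 u) (vec2 v)) = (\<Prod>i\<in>UNIV. vec2 v $ i - vec2 u $ i)"
      by (intro content_cbox_cart) blast
    also have "\<dots> = (v1 - u1) * (v2 - u2)"
      by (simp add: uv UNIV_2 vec2_def)
    finally show ?thesis
      using True by (simp add: uv vec2_image_cbox content_Pair)
  next
    case False
    then have "cbox (vec2 u) (vec2 v) = {}" "cbox u v = {}"
      by (auto simp: uv vec2_def mem_cbox_real2 cbox_Pair_eq)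
    then show ?thesis
      by (simp add: vec2_image_cbox)
  qed
qed

lemma bounded_linear_vec2: "bounded_linear vec2"
  unfolding linear_conv_bounded_linear[symmetric]
  by (rule linearI) (auto simp: vec2_def vec_eq_iff forall_2)

lemma integral_cbox_vec2_iterated:
  fixes F :: "real^2 \<Rightarrow> 'c::banach"
  assumes "continuous_on (cbox a b) F"
  shows "integral (cbox a b) F = integral {a$1..b$1} (\<lambda>x. integral {a$2..b$2} (\<lambda>y. F (vector [x, y])))"
proof -
  have "((\<lambda>z. F (vec2 z)) has_integral (1 / 1) *\<^sub>R integral (cbox a b) F) (unvec2 ` cbox a b)"
  proof (rule has_integral_twiddle)
    show "(F has_integral integral (cbox a b) F) (cbox a b)"
      using assms by (intro integrable_integral integrable_continuous)
    show "\<exists>w z. vec2 ` cbox u v = cbox w z" for u v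
      using vec2_image_cbox by blast
    show "\<exists>w z. unvec2 ` cbox u v = cbox w z" for u v
      using unvec2_image_cbox by blast
  qed (simp_all add: measure_vec2_image_cbox linear_continuous_at[OF bounded_linear_vec2])
  then have "integral (cbox (unvec2 a) (unvec2 b)) (\<lambda>z. F (vec2 z)) = integral (cbox a b) F"
    by (simp add: unvec2_image_cbox integral_unique)
  moreover have "continuous_on (cbox (unvec2 a) (unvec2 b)) (\<lambda>z. F (vec2 z))"
    using assms vec2_image_cbox[of "unvec2 a" "unvec2 b"]
    by (intro continuous_on_compose2[OF assms] linear_continuous_on bounded_linear_vec2) auto
  ultimately show ?thesis
    using integral_prod_continuous[of "a$1" "a$2" "b$1" "b$2" "\<lambda>z. F (vec2 z)"]
    by (simp add: unvec2_def vec2_def cbox_interval)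
qed

lemma norm_real2: "norm (x::real^2) = sqrt ((x$1)\<^sup>2 + (x$2)\<^sup>2)"
  by (simp add: norm_vec_def L2_set_def sum_2)

definition polar :: "real^2 \<Rightarrow> real^2" where
  "polar p = (p$1 * cos (p$2)) *\<^sub>R axis 1 1 + (p$1 * sin (p$2)) *\<^sub>R axis 2 1"

definition polar_derivative :: "real^2 \<Rightarrow> real^2 \<Rightarrow> real^2" where
  "polar_derivative p h =
     (h$1 * cos (p$2) - p$1 * sin (p$2) * h$2) *\<^sub>R axis 1 1 +
     (h$1 * sin (p$2) + p$1 * cos (p$2) * h$2) *\<^sub>R axis 2 1"

(* Half-open in the angle so that polar is injective on it; it differs from a closed box by a
   null set. *)
definition polar_rect :: "real \<Rightarrow> real \<Rightarrow> (real^2) set" where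
  "polar_rect r0 R = {p. r0 \<le> p$1 \<and> p$1 \<le> R \<and> 0 \<le> p$2 \<and> p$2 < 2*pi}"

lemma polar_nth [simp]: "polar p $ 1 = p$1 * cos (p$2)" "polar p $ 2 = p$1 * sin (p$2)"
  by (simp_all add: polar_def axis_def)

lemma has_derivative_polar: "(polar has_derivative polar_derivative p) (at p within S)"
  unfolding polar_def[abs_def] polar_derivative_def[abs_def]
  by (rule derivative_eq_intros refl bounded_linear.has_derivative[OF bounded_linear_vec_nth] | simp)+
     (simp add: fun_eq_iff algebra_simps)

lemma det_polar_derivative: "det (matrix (polar_derivative p)) = p$1"
  by (simp add: det_2 matrix_def polar_derivative_def axis_def algebra_simps flip: power2_eq_square)
     (simp only: sin_cos_squared_add2 flip: distrib_left)

lemma norm_polar: "norm (polar p) = \<bar>p$1\<bar>"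
proof -
  have "(p$1 * cos (p$2))\<^sup>2 + (p$1 * sin (p$2))\<^sup>2 = (p$1)\<^sup>2"
    by (simp add: power_mult_distrib distrib_left[symmetric])
  then show ?thesis
    by (simp add: norm_real2)
qed

lemma polar_eq_Complex: "of_real (p$1) * exp (\<i> * of_real (p$2)) = Complex (polar p $ 1) (polar p $ 2)"
  by (simp add: complex_eq_iff Re_exp Im_exp)

lemma inj_on_polar_rect: "0 < r0 \<Longrightarrow> inj_on polar (polar_rect r0 R)"
proof (rule inj_onI)
  fix p q
  assume r0: "0 < r0" and p: "p \<in> polar_rect r0 R" and q: "q \<in> polar_rect r0 R" and eq: "polar p = polar q"
  have "p$1 = q$1"
    using arg_cong[OF eq, of norm] p q r0 by (simp add: norm_polar polar_rect_def)
  moreover have "Arg2pi (Complex (polar p $ 1) (polar p $ 2)) = p$2"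
    "Arg2pi (Complex (polar q $ 1) (polar q $ 2)) = q$2"
    using p q r0 by (auto simp: polar_rect_def simp del: polar_nth intro!: Arg2pi_unique[OF polar_eq_Complex])
  then have "p$2 = q$2"
    using eq by simp
  ultimately show "p = q"
    by (simp add: vec_eq_iff forall_2)
qed

lemma polar_image_polar_rect: "0 < r0 \<Longrightarrow> polar ` polar_rect r0 R = annulus r0 R"
proof (intro equalityI subsetI)
  show "d \<in> annulus r0 R" if "0 < r0" "d \<in> polar ` polar_rect r0 R" for d
    using that by (auto simp: annulus_def polar_rect_def norm_polar)
next
  fix d
  assume "d \<in> annulus r0 R"
  define z where "z = Complex (d$1) (d$2)"
  have "cmod z = norm d"
    by (simp add: z_def cmod_def norm_real2)
  moreover have "0 \<le> Arg2pi z" "Arg2pi z < 2*pi" "z = of_real (cmod z) * exp (\<i> * of_real (Arg2pi z))"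
    using Arg2pi[of z] by (simp_all add: is_Arg_def)
  ultimately have "polar (vector [norm d, Arg2pi z]) = d" "vector [norm d, Arg2pi z] \<in> polar_rect r0 R"
    using \<open>d \<in> annulus r0 R\<close> polar_eq_Complex[of "vector [norm d, Arg2pi z]", symmetric]
    by (auto simp: z_def complex_eq_iff vec_eq_iff forall_2 polar_rect_def annulus_def simp del: polar_nth)
  then show "d \<in> polar ` polar_rect r0 R"
    by (metis image_eqI)
qed

lemma continuous_on_polar: "continuous_on S polar"
  unfolding polar_def by (intro continuous_intros)

lemma polar_rect_subset_cbox:
  "polar_rect r0 R \<subseteq> cbox (vector [r0, 0]) (vector [R, 2*pi])"
  by (auto simp: polar_rect_def mem_cbox_real2)

lemma polar_rect_lebesgue: "polar_rect r0 R \<in> sets lebesgue"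
proof -
  have "polar_rect r0 R \<in> sets borel"
    unfolding polar_rect_def by measurable
  then show ?thesis
    by simp
qed

lemma integral_polar_rect_eq_cbox:
  fixes f :: "real^2 \<Rightarrow> 'a::banach"
  shows "integral (polar_rect r0 R) f = integral (cbox (vector [r0, 0]) (vector [R, 2*pi])) f"
proof (rule integral_spike_set)
  show "negligible {p \<in> polar_rect r0 R - cbox (vector [r0, 0]) (vector [R, 2*pi]). f p \<noteq> 0}"
    by (rule empty_imp_negligible) (use polar_rect_subset_cbox in blast)
  have "{p \<in> cbox (vector [r0, 0]) (vector [R, 2*pi]) - polar_rect r0 R. f p \<noteq> 0}
      \<subseteq> {p. p \<bullet> axis 2 1 = 2*pi}"
    by (auto simp: polar_rect_def mem_cbox_real2 inner_axis)
  moreover have "negligible {p::real^2. p \<bullet> axis 2 1 = 2*pi}"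
    by (rule negligible_standard_hyperplane) (auto simp: Basis_vec_def)
  ultimately show "negligible {p \<in> cbox (vector [r0, 0]) (vector [R, 2*pi]) - polar_rect r0 R. f p \<noteq> 0}"
    by (rule negligible_subset[rotated])
qed

lemma has_integral_polar:
  fixes phi :: "real^2 \<Rightarrow> real"
  assumes r0: "0 < r0" "r0 \<le> R" and phi: "continuous_on (annulus r0 R) phi"
  shows "(phi has_integral integral {r0..R} (\<lambda>r. integral {0..2*pi} (\<lambda>\<theta>. r * phi (polar (vector [r, \<theta>])))))
           (annulus r0 R)"
proof -
  define box where "box = cbox (vector [r0, 0]) (vector [R, 2*pi] :: real^2)"
  \<comment> \<open>Change of variables is stated for functions into \<open>real^'n\<close>, hence the detour through \<open>real^1\<close>.\<close>
  define F where "F d = phi d *\<^sub>R (1::real^1)" for d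
  define psi where "psi p = p$1 * phi (polar p)" for p
  have jacobian: "\<bar>det (matrix (polar_derivative p))\<bar> *\<^sub>R F (polar p) = psi p *\<^sub>R 1" if "p \<in> box" for p
    using that r0 by (simp add: det_polar_derivative F_def psi_def box_def mem_cbox_real2)
  have "polar ` box \<subseteq> annulus r0 R"
    using r0 by (auto simp: box_def mem_cbox_real2 annulus_def norm_polar)
  then have psi: "continuous_on box psi"
    unfolding psi_def
    by (intro continuous_intros continuous_on_compose2[OF phi continuous_on_polar])
  then have "(\<lambda>p. \<bar>det (matrix (polar_derivative p))\<bar> *\<^sub>R F (polar p)) absolutely_integrable_on box"
    unfolding box_def using jacobian
    by (intro absolutely_integrable_continuous)
       (auto simp: box_def intro!: continuous_intros cong: continuous_on_cong)
  then have "(\<lambda>p. \<bar>det (matrix (polar_derivative p))\<bar> *\<^sub>R F (polar p))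
      absolutely_integrable_on polar_rect r0 R"
    by (rule set_integrable_subset) (simp_all add: box_def polar_rect_subset_cbox polar_rect_lebesgue)
  then have F: "F absolutely_integrable_on annulus r0 R"
    and change: "integral (annulus r0 R) F
      = integral (polar_rect r0 R) (\<lambda>p. \<bar>det (matrix (polar_derivative p))\<bar> *\<^sub>R F (polar p))"
    using has_absolute_integral_change_of_variables[OF polar_rect_lebesgue has_derivative_polar
        inj_on_polar_rect[OF r0(1), of R], where f=F]
    unfolding polar_image_polar_rect[OF r0(1)] by blast+
  have "integral (annulus r0 R) F = integral box (\<lambda>p. psi p *\<^sub>R 1)"
    unfolding change integral_polar_rect_eq_cbox box_def[symmetric] using jacobian by (rule integral_cong)
  also have "\<dots> = integral box psi *\<^sub>R 1"
    using integrable_continuous[OF psi[unfolded box_def]] unfolding box_def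
    by (intro integral_unique has_integral_scaleR_left integrable_integral)
  finally have "(F has_integral integral box psi *\<^sub>R 1) (annulus r0 R)"
    using F set_lebesgue_integral_eq_integral(1) integrable_integral by metis
  from has_integral_linear[OF this bounded_linear_vec_nth[of 1]]
  have "(phi has_integral integral box psi) (annulus r0 R)"
    by (simp add: F_def o_def)
  moreover have "integral box psi
      = integral {r0..R} (\<lambda>r. integral {0..2*pi} (\<lambda>\<theta>. r * phi (polar (vector [r, \<theta>]))))"
    unfolding box_def integral_cbox_vec2_iterated[OF psi[unfolded box_def]]
    by (simp add: psi_def)
  ultimately show ?thesis
    by simp
qed

lemma has_integral_real_derivative:
  fixes F f :: "real \<Rightarrow> real"
  assumes "a \<le> b" and "\<And>x. x \<in> {a..b} \<Longrightarrow> (F has_real_derivative f x) (at x)"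
  shows "(f has_integral (F b - F a)) {a..b}"
  using assms
  by (intro fundamental_theorem_of_calculus)
     (auto simp: has_real_derivative_iff_has_vector_derivative[symmetric] intro: has_field_derivative_at_within)

lemma has_integral_angular_sin_sq:
  "((\<lambda>t. (a * cos t + b * sin t)\<^sup>2 * (sin t)\<^sup>2) has_integral pi * (a\<^sup>2 + 3 * b\<^sup>2) / 4) {0..2*pi}"
proof -
  define F where "F t = a\<^sup>2 * (t/8 + sin t * cos t / 8 - sin t * cos t ^ 3 / 4) + 2*a*b * (sin t ^ 4 / 4)
     + b\<^sup>2 * (3*t/8 - 5 * sin t * cos t / 8 + sin t * cos t ^ 3 / 4)" for t
  have "(F has_real_derivative (a * cos t + b * sin t)\<^sup>2 * (sin t)\<^sup>2) (at t)" for t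
    unfolding F_def by ((rule derivative_eq_intros refl | simp)+) (use sin_cos_squared_add[of t] in algebra)
  then have "((\<lambda>t. (a * cos t + b * sin t)\<^sup>2 * (sin t)\<^sup>2) has_integral (F (2*pi) - F 0)) {0..2*pi}"
    by (intro has_integral_real_derivative) auto
  moreover have "F (2*pi) - F 0 = pi * (a\<^sup>2 + 3 * b\<^sup>2) / 4"
    by (simp add: F_def algebra_simps)
  ultimately show ?thesis
    by simp
qed

lemma has_integral_angular_cos_sq:
  "((\<lambda>t. (a * cos t + b * sin t)\<^sup>2 * (cos t)\<^sup>2) has_integral pi * (3 * a\<^sup>2 + b\<^sup>2) / 4) {0..2*pi}"
proof -
  define F where "F t = a\<^sup>2 * (3*t/8 + 3 * sin t * cos t / 8 + sin t * cos t ^ 3 / 4) + 2*a*b * (- (cos t ^ 4) / 4)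
     + b\<^sup>2 * (t/8 + sin t * cos t / 8 - sin t * cos t ^ 3 / 4)" for t
  have "(F has_real_derivative (a * cos t + b * sin t)\<^sup>2 * (cos t)\<^sup>2) (at t)" for t
    unfolding F_def by ((rule derivative_eq_intros refl | simp)+) (use sin_cos_squared_add[of t] in algebra)
  then have "((\<lambda>t. (a * cos t + b * sin t)\<^sup>2 * (cos t)\<^sup>2) has_integral (F (2*pi) - F 0)) {0..2*pi}"
    by (intro has_integral_real_derivative) auto
  moreover have "F (2*pi) - F 0 = pi * (3 * a\<^sup>2 + b\<^sup>2) / 4"
    by (simp add: F_def algebra_simps)
  ultimately show ?thesis
    by simp
qed

lemma has_integral_angular_cos_sin:
  "((\<lambda>t. - ((a * cos t + b * sin t)\<^sup>2 * (cos t * sin t))) has_integral - (pi * a * b / 2)) {0..2*pi}"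
proof -
  define F where "F t = - (a\<^sup>2 * (- (cos t ^ 4) / 4) + 2*a*b * (t/8 + sin t * cos t / 8 - sin t * cos t ^ 3 / 4)
     + b\<^sup>2 * (sin t ^ 4 / 4))" for t
  have "(F has_real_derivative - ((a * cos t + b * sin t)\<^sup>2 * (cos t * sin t))) (at t)" for t
    unfolding F_def by ((rule derivative_eq_intros refl | simp)+) (use sin_cos_squared_add[of t] in algebra)
  then have "((\<lambda>t. - ((a * cos t + b * sin t)\<^sup>2 * (cos t * sin t))) has_integral (F (2*pi) - F 0)) {0..2*pi}"
    by (intro has_integral_real_derivative) auto
  moreover have "F (2*pi) - F 0 = - (pi * a * b / 2)"
    by (simp add: F_def algebra_simps)
  ultimately show ?thesis
    by simp
qed

lemma has_integral_inverse_cube: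
  fixes c :: real
  assumes "0 < r0" "r0 \<le> R"
  shows "((\<lambda>r. c / r ^ 3) has_integral c * (1 / r0\<^sup>2 - 1 / R\<^sup>2) / 2) {r0..R}"
proof -
  define F where "F r = - c / (2 * r\<^sup>2)" for r :: real
  have "(F has_real_derivative c / r ^ 3) (at r)" if "r \<in> {r0..R}" for r
    using that assms unfolding F_def
    by (auto intro!: derivative_eq_intros simp: field_simps power2_eq_square power3_eq_cube)
  then have "((\<lambda>r. c / r ^ 3) has_integral (F R - F r0)) {r0..R}"
    using assms by (intro has_integral_real_derivative) auto
  then show ?thesis
    using assms by (simp add: F_def field_simps)
qed

lemma bearing_kernel_polar:
  fixes r \<theta> :: real
  assumes r: "r > 0"
  defines "c \<equiv> cos \<theta>" and "s \<equiv> sin \<theta>"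
  shows "r * bearing_kernel u (polar (vector [r, \<theta>])) $ 1 $ 1 = (u$1 * c + u$2 * s)\<^sup>2 * s\<^sup>2 / r ^ 3"
    and "r * bearing_kernel u (polar (vector [r, \<theta>])) $ 2 $ 2 = (u$1 * c + u$2 * s)\<^sup>2 * c\<^sup>2 / r ^ 3"
    and "r * bearing_kernel u (polar (vector [r, \<theta>])) $ 1 $ 2 = - ((u$1 * c + u$2 * s)\<^sup>2 * (c * s)) / r ^ 3"
    and "r * bearing_kernel u (polar (vector [r, \<theta>])) $ 2 $ 1 = - ((u$1 * c + u$2 * s)\<^sup>2 * (c * s)) / r ^ 3"
proof -
  have "norm (polar (vector [r, \<theta>])) = r"
    using r by (simp add: norm_polar)
  moreover have "polar (vector [r, \<theta>]) \<bullet> u = r * (u$1 * c + u$2 * s)"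
    by (simp add: inner_vec_def sum_2 c_def s_def algebra_simps)
  ultimately have entry: "bearing_kernel u (polar (vector [r, \<theta>])) $ i $ j = (r * (u$1 * c + u$2 * s))\<^sup>2 / r ^ 8 *
      (r\<^sup>2 * (if i = j then 1 else 0) - polar (vector [r, \<theta>]) $ i * polar (vector [r, \<theta>]) $ j)" for i j
    by (simp add: bearing_kernel_def outer_def mat_def)
  have sc: "s\<^sup>2 + c\<^sup>2 = 1"
    by (simp add: s_def c_def)
  show "r * bearing_kernel u (polar (vector [r, \<theta>])) $ 1 $ 1 = (u$1 * c + u$2 * s)\<^sup>2 * s\<^sup>2 / r ^ 3"
    unfolding entry using r sc by (simp add: c_def[symmetric] s_def[symmetric] field_simps) algebra
  show "r * bearing_kernel u (polar (vector [r, \<theta>])) $ 2 $ 2 = (u$1 * c + u$2 * s)\<^sup>2 * c\<^sup>2 / r ^ 3"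
    unfolding entry using r sc by (simp add: c_def[symmetric] s_def[symmetric] field_simps) algebra
  show "r * bearing_kernel u (polar (vector [r, \<theta>])) $ 1 $ 2 = - ((u$1 * c + u$2 * s)\<^sup>2 * (c * s)) / r ^ 3"
    unfolding entry using r by (simp add: c_def[symmetric] s_def[symmetric] field_simps eval_nat_numeral)
  show "r * bearing_kernel u (polar (vector [r, \<theta>])) $ 2 $ 1 = - ((u$1 * c + u$2 * s)\<^sup>2 * (c * s)) / r ^ 3"
    unfolding entry using r by (simp add: c_def[symmetric] s_def[symmetric] field_simps eval_nat_numeral)
qed

lemma has_integral_bearing_kernel_entry:
  fixes P :: "real \<Rightarrow> real" and i j :: 2
  assumes r0: "0 < r0" "r0 < R"
    and P: "(P has_integral c) {0..2*pi}"
    and polar_entry: "\<And>r \<theta>. r > 0 \<Longrightarrow> r * bearing_kernel u (polar (vector [r, \<theta>])) $ i $ j = P \<theta> / r ^ 3"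
  shows "((\<lambda>d. bearing_kernel u d $ i $ j) has_integral c * (1 / r0\<^sup>2 - 1 / R\<^sup>2) / 2) (annulus r0 R)"
proof -
  have "continuous_on (annulus r0 R) (\<lambda>d. bearing_kernel u d $ i $ j)"
    using r0 by (intro continuous_on_component continuous_on_bearing_kernel zero_notin_annulus)
  then have "((\<lambda>d. bearing_kernel u d $ i $ j) has_integral
      integral {r0..R} (\<lambda>r. integral {0..2*pi} (\<lambda>\<theta>. r * bearing_kernel u (polar (vector [r, \<theta>])) $ i $ j)))
      (annulus r0 R)"
    using r0 by (intro has_integral_polar) auto
  also have "integral {r0..R} (\<lambda>r. integral {0..2*pi} (\<lambda>\<theta>. r * bearing_kernel u (polar (vector [r, \<theta>])) $ i $ j))
      = integral {r0..R} (\<lambda>r. c / r ^ 3)"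
  proof (rule integral_cong)
    fix r
    assume "r \<in> {r0..R}"
    then have "integral {0..2*pi} (\<lambda>\<theta>. r * bearing_kernel u (polar (vector [r, \<theta>])) $ i $ j)
        = integral {0..2*pi} (\<lambda>\<theta>. P \<theta> / r ^ 3)"
      using r0 by (intro integral_cong) (simp add: polar_entry)
    also have "\<dots> = c / r ^ 3"
      using has_integral_divide[OF P] by (rule integral_unique)
    finally show "integral {0..2*pi} (\<lambda>\<theta>. r * bearing_kernel u (polar (vector [r, \<theta>])) $ i $ j) = c / r ^ 3" .
  qed
  also have "\<dots> = c * (1 / r0\<^sup>2 - 1 / R\<^sup>2) / 2"
    using has_integral_inverse_cube[of r0 R c] r0 by (intro integral_unique) auto
  finally show ?thesis .
qed

lemma integral_bearing_kernel:
  fixes u :: "real^2"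
  assumes r0: "0 < r0" "r0 < R" and u: "norm u = 1"
  shows "(\<integral>d. indicator (annulus r0 R) d *\<^sub>R bearing_kernel u d \<partial>lborel)
       = (pi * (1 / r0\<^sup>2 - 1 / R\<^sup>2) / 8) *\<^sub>R (3 *\<^sub>R mat 1 - 2 *\<^sub>R outer u u)"
proof -
  define G where "G = integral (annulus r0 R) (bearing_kernel u)"
  define w where "w = 1 / r0\<^sup>2 - 1 / R\<^sup>2"
  have lborel: "(\<integral>d. indicator (annulus r0 R) d *\<^sub>R bearing_kernel u d \<partial>lborel) = G"
    and "bearing_kernel u integrable_on annulus r0 R"
    using set_borel_integral_eq_integral[OF set_integrable_bearing_kernel[OF r0(1)]]
    by (simp_all add: G_def set_lebesgue_integral_def)
  then have "((\<lambda>d. bearing_kernel u d $ i $ j) has_integral G $ i $ j) (annulus r0 R)" for i j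
    unfolding G_def
    using has_integral_linear[OF _ bounded_linear_compose[OF bounded_linear_vec_nth bounded_linear_vec_nth]]
    by (force simp: o_def)
  note entry = has_integral_unique[OF this has_integral_bearing_kernel_entry[OF r0]]
  have "G $ 1 $ 1 = pi * ((u$1)\<^sup>2 + 3 * (u$2)\<^sup>2) / 4 * w / 2"
    using entry[OF has_integral_angular_sin_sq bearing_kernel_polar(1)] by (simp add: w_def)
  moreover have "G $ 2 $ 2 = pi * (3 * (u$1)\<^sup>2 + (u$2)\<^sup>2) / 4 * w / 2"
    using entry[OF has_integral_angular_cos_sq bearing_kernel_polar(2)] by (simp add: w_def)
  moreover have "G $ 1 $ 2 = - (pi * u$1 * u$2 / 2) * w / 2" "G $ 2 $ 1 = - (pi * u$1 * u$2 / 2) * w / 2"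
    using entry[OF has_integral_angular_cos_sin bearing_kernel_polar(3)]
      entry[OF has_integral_angular_cos_sin bearing_kernel_polar(4)] by (simp_all add: w_def)
  moreover have "(u$1)\<^sup>2 + (u$2)\<^sup>2 = 1"
    using u by (simp add: norm_real2)
  ultimately have "G = (pi * w / 8) *\<^sub>R (3 *\<^sub>R mat 1 - 2 *\<^sub>R outer u u)"
    by (simp add: vec_eq_iff forall_2 mat_def outer_def field_simps) algebra
  then show ?thesis
    unfolding lborel w_def .
qed

section \<open>The smallest eigenvalue\<close>

lemma lambda_min_three_id_minus_two_outer:
  fixes u :: "real^2"
  assumes u: "norm u = 1" and b: "b > 0"
  shows "lambda_min (b *\<^sub>R (3 *\<^sub>R mat 1 - 2 *\<^sub>R outer u u)) = b"
proof -
  have apply_matrix: "(b *\<^sub>R (3 *\<^sub>R mat 1 - 2 *\<^sub>R outer u u)) *v w = b *\<^sub>R (3 *\<^sub>R w - (2 * (u \<bullet> w)) *\<^sub>R u)" for w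
    by (simp add: vec_eq_iff forall_2 matrix_vector_mult_def sum_2 mat_def outer_def inner_vec_def algebra_simps)
  have uu: "u \<bullet> u = 1"
    using u by (simp add: norm_eq_sqrt_inner)
  show ?thesis
    unfolding lambda_min_def
  proof (rule cInf_eq_minimum)
    have "(b *\<^sub>R (3 *\<^sub>R mat 1 - 2 *\<^sub>R outer u u)) *v u = b *\<^sub>R u"
      by (simp only: apply_matrix) (simp add: uu flip: scaleR_left_distrib scaleR_diff_left)
    moreover have "u \<noteq> 0"
      using u by auto
    ultimately
    show "b \<in> {l. \<exists>w. w \<noteq> 0 \<and> (b *\<^sub>R (3 *\<^sub>R mat 1 - 2 *\<^sub>R outer u u)) *v w = l *\<^sub>R w}"
      by blast
  next
    fix l
    assume "l \<in> {l. \<exists>w. w \<noteq> 0 \<and> (b *\<^sub>R (3 *\<^sub>R mat 1 - 2 *\<^sub>R outer u u)) *v w = l *\<^sub>R w}"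
    then obtain w where w: "w \<noteq> 0" "b *\<^sub>R (3 *\<^sub>R w - (2 * (u \<bullet> w)) *\<^sub>R u) = l *\<^sub>R w"
      by (auto simp: apply_matrix)
    then have "w \<bullet> (b *\<^sub>R (3 *\<^sub>R w - (2 * (u \<bullet> w)) *\<^sub>R u)) = w \<bullet> (l *\<^sub>R w)"
      by simp
    then have rayleigh: "b * (3 * (w \<bullet> w) - 2 * (u \<bullet> w)\<^sup>2) = l * (w \<bullet> w)"
      by (simp add: inner_diff_right algebra_simps power2_eq_square inner_commute)
    have "(u \<bullet> w)\<^sup>2 \<le> w \<bullet> w"
      using Cauchy_Schwarz_ineq[of u w] uu by simp
    with b have "b * (w \<bullet> w) \<le> l * (w \<bullet> w)"
      unfolding rayleigh[symmetric] by (simp add: algebra_simps)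
    then show "b \<le> l"
      using w(1) by simp
  qed
qed

lemma six_sum_squares: "6 * (\<Sum>t=1..T. (real t)\<^sup>2) = real T * (real T + 1) * (2 * real T + 1)"
  by (induction T) (auto simp: algebra_simps power2_eq_square)

theorem lemma8:
  fixes x v :: "real^2" and kappa r0 R :: real
  assumes "v \<noteq> 0" and "kappa > 0" and "0 < r0" and "r0 < R"
  defines "A \<equiv> \<lambda>T::nat. \<Sum>t=1..T.
      ppp_expect kappa (cball (x + real t *\<^sub>R v) R)
        (\<lambda>p. let d = x + real t *\<^sub>R v - p in
              if r0 \<le> norm d \<and> norm d \<le> R
              then ((real t)\<^sup>2 * (comp_along v d)\<^sup>2 / norm d ^ 8) *\<^sub>R
                     ((norm d)\<^sup>2 *\<^sub>R mat 1 - outer d d)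
              else 0)"
  shows "(\<lambda>T. lambda_min (A T) / (real T * (real T + 1) * (2 * real T + 1)))
           \<longlonglongrightarrow> pi / 48 * kappa * (1 / r0\<^sup>2 - 1 / R\<^sup>2)"
proof -
  define u where "u = v /\<^sub>R norm v"
  define w where "w = 1 / r0\<^sup>2 - 1 / R\<^sup>2"
  define N where "N = 3 *\<^sub>R mat 1 - 2 *\<^sub>R outer u u"
  define S where "S T = (\<Sum>t=1..T. (real t)\<^sup>2)" for T
  have u: "norm u = 1"
    using assms(1) by (simp add: u_def)
  have "w > 0"
    using assms(3,4) by (simp add: w_def field_simps power_strict_mono)
  have A: "A T = (kappa * (pi * w / 8) * S T) *\<^sub>R N" for T
  proof -
    have "A T = (\<Sum>t=1..T. (kappa * (real t)\<^sup>2) *\<^sub>R ((pi * w / 8) *\<^sub>R N))"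
      unfolding A_def ppp_expect_bearing_term[OF assms(2-4)] u_def[symmetric]
      by (simp add: integral_bearing_kernel[OF assms(3,4) u] w_def N_def)
    also have "\<dots> = (kappa * (pi * w / 8) * S T) *\<^sub>R N"
      by (simp add: S_def scaleR_sum_left[symmetric] sum_distrib_left algebra_simps)
    finally show ?thesis .
  qed
  have "lambda_min (A T) / (real T * (real T + 1) * (2 * real T + 1)) = pi / 48 * kappa * w" if "T \<ge> 1" for T
  proof -
    have "S T > 0"
      unfolding S_def using that by (intro sum_pos) auto
    then have "lambda_min (A T) = kappa * (pi * w / 8) * S T"
      unfolding A N_def using \<open>w > 0\<close> assms(2) by (intro lambda_min_three_id_minus_two_outer u) simp
    moreover have "real T * (real T + 1) * (2 * real T + 1) = 6 * S T"
      unfolding S_def by (rule six_sum_squares[symmetric])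
    ultimately show ?thesis
      using \<open>S T > 0\<close> by (simp add: field_simps)
  qed
  then have "\<forall>\<^sub>F T in sequentially.
      lambda_min (A T) / (real T * (real T + 1) * (2 * real T + 1)) = pi / 48 * kappa * w"
    using eventually_sequentially by blast
  then show ?thesis
    unfolding w_def[symmetric] by (rule tendsto_eventually)
qed

end
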